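(* The generating function $\sum_{n\ge0}2^{n(n+3)/2}x^n$ (sequence $1,4,32,512,16384,\dots$) has, as formal power series, the Jacobi continued fraction expansion $$\sum_{n\ge0}2^{n(n+3)/2}x^n=\cfrac{1}{1-\beta_0x-\cfrac{\lambda_1x^2}{1-\beta_1x-\cfrac{\lambda_2x^2}{1-\beta_2x-\cdots}}},\qquad \beta_n=2^{n+1}(2^{n+1}+2^{n}-1),\ \ \lambda_n=2^{3n+1}(2^{n}-1),$$ (so $\beta_0,\beta_1,\beta_2,\dots=4,20,88,368,\dots$ and $\lambda_1,\lambda_2,\dots=16,384,7168,\dots$), and equivalently the Stieltjes continued fraction expansion $$\sum_{n\ge0}2^{n(n+3)/2}x^n=\cfrac{1}{1-\cfrac{b(0)x}{1-\cfrac{b(1)x}{1-\cfrac{b(2)x}{1-\cdots}}}},\qquad b(n)=2^{n+2}-2^{(n+1)/2}\bigl(1-(-1)^n\bigr)\ (n\ge0),$$ so that $b(0),b(1),b(2),\dots=4,4,16,24,64,\dots$. *)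

theory Defs
  imports "HOL-Computational_Algebra.Formal_Power_Series"
begin

text \<open>Truncated Jacobi continued fraction denominators.
  jden b l k m is the formal power series
  1 - b k X - l (k+1) X^2 / (1 - b (k+1) X - ... - l (k+m) X^2 / (1 - b (k+m) X)),
  i.e. the tail of the J-fraction starting at level k, truncated after m further levels.\<close>
fun jden :: "(nat \<Rightarrow> 'a::field) \<Rightarrow> (nat \<Rightarrow> 'a) \<Rightarrow> nat \<Rightarrow> nat \<Rightarrow> 'a fps" where
  "jden b l k 0 = 1 - fps_const (b k) * fps_X"
| "jden b l k (Suc m) = 1 - fps_const (b k) * fps_X
      - fps_const (l (Suc k)) * fps_X ^ 2 * inverse (jden b l (Suc k) m)"

definition jconv :: "(nat \<Rightarrow> 'a::field) \<Rightarrow> (nat \<Rightarrow> 'a) \<Rightarrow> nat \<Rightarrow> 'a fps" where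
  "jconv b l N = inverse (jden b l 0 N)"

fun sden :: "(nat \<Rightarrow> 'a::field) \<Rightarrow> nat \<Rightarrow> nat \<Rightarrow> 'a fps" where
  "sden a k 0 = 1 - fps_const (a k) * fps_X"
| "sden a k (Suc m) = 1 - fps_const (a k) * fps_X * inverse (sden a (Suc k) m)"

definition sconv :: "(nat \<Rightarrow> 'a::field) \<Rightarrow> nat \<Rightarrow> 'a fps" where
  "sconv a N = inverse (sden a 0 N)"

text \<open>An infinite continued fraction equals f as formal power series iff its convergents
  converge to f in the (x-adic) topology of formal power series.\<close>
definition has_jfrac :: "'a::field fps \<Rightarrow> (nat \<Rightarrow> 'a) \<Rightarrow> (nat \<Rightarrow> 'a) \<Rightarrow> bool" where
  "has_jfrac f b l \<longleftrightarrow> (jconv b l \<longlonglongrightarrow> f)"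

definition has_sfrac :: "'a::field fps \<Rightarrow> (nat \<Rightarrow> 'a) \<Rightarrow> bool" where
  "has_sfrac f a \<longleftrightarrow> (sconv a \<longlonglongrightarrow> f)"

end

theory Submission
  imports Defs
begin

(*
  If power series P 0 = 1, P 1 = F, P 2, ... with nonzero constant terms satisfy
  P k = P (k+1) - b k x P (k+2), then the ratios P (k+1) / P k satisfy
  P (k+1) / P k = 1 / (1 - b k x P (k+2) / P (k+1)), so the m-th convergent of the
  S-fraction agrees with F in the coefficients of x^0, ..., x^m.  Eliminating every
  second P (even contraction) yields a J-fraction recurrence, and the J-fraction
  follows in the same way.

  For F = sum 2^(n(n+3)/2) x^n one may take P (k+1) = sum 2^(n(n+3)/2) 2^(ceil(k/2) n)
  [n + floor(k/2), floor(k/2)]_2 x^n, with Gaussian binomials at q = 2; coefficientwise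
  the recurrence is a q-Pascal rule.
*)

unbundle fps_syntax

section \<open>Continued fractions from three-term recurrences\<close>

lemma fps_dvd_inverse_diff:
  fixes A B :: "'a::field fps"
  assumes "A $ 0 \<noteq> 0" "B $ 0 \<noteq> 0" "p dvd B - A"
  shows "p dvd inverse A - inverse B"
proof -
  have "inverse A * inverse B * (B - A)
      = inverse A * (inverse B * B) - inverse B * (inverse A * A)"
    by (simp add: algebra_simps)
  also have "\<dots> = inverse A - inverse B"
    using assms(1,2) by (simp add: inverse_mult_eq_1)
  finally show ?thesis
    using assms(3) by (metis dvd_mult)
qed

lemma jfrac_step_dvd:
  fixes A B :: "'a::field fps"
  assumes "fps_X ^ N dvd A - B"
  shows "fps_X ^ (N + 2) dvd
           inverse (1 - fps_const c * fps_X - fps_const d * fps_X ^ 2 * A)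
         - inverse (1 - fps_const c * fps_X - fps_const d * fps_X ^ 2 * B)"
proof (rule fps_dvd_inverse_diff)
  obtain C where C: "A - B = fps_X ^ N * C"
    using assms by blast
  have "fps_const d * (fps_X ^ 2 * (A - B)) = fps_X ^ (N + 2) * (fps_const d * C)"
    unfolding C by (simp only: power_add mult_ac)
  then have "fps_X ^ (N + 2) dvd fps_const d * (fps_X ^ 2 * (A - B))"
    by (metis dvd_triv_left)
  then show "fps_X ^ (N + 2) dvd
      (1 - fps_const c * fps_X - fps_const d * fps_X ^ 2 * B)
    - (1 - fps_const c * fps_X - fps_const d * fps_X ^ 2 * A)"
    by (simp add: algebra_simps)
qed (simp_all add: power2_eq_square)

lemma sfrac_step_dvd:
  fixes A B :: "'a::field fps"
  assumes "fps_X ^ N dvd A - B"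
  shows "fps_X ^ (N + 1) dvd
           inverse (1 - fps_const c * fps_X * A) - inverse (1 - fps_const c * fps_X * B)"
proof (rule fps_dvd_inverse_diff)
  obtain C where C: "A - B = fps_X ^ N * C"
    using assms by blast
  have "fps_const c * (fps_X * (A - B)) = fps_X ^ (N + 1) * (fps_const c * C)"
    unfolding C by (simp only: power_Suc2 Suc_eq_plus1[symmetric] mult_ac)
  then have "fps_X ^ (N + 1) dvd fps_const c * (fps_X * (A - B))"
    by (metis dvd_triv_left)
  then show "fps_X ^ (N + 1) dvd (1 - fps_const c * fps_X * B) - (1 - fps_const c * fps_X * A)"
    by (simp add: algebra_simps)
qed simp_all

lemma jden_inverse_approx:
  fixes U :: "nat \<Rightarrow> 'a::field fps"
  assumes U: "\<And>k. U k = inverse (1 - fps_const (b k) * fps_X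
                                    - fps_const (l (Suc k)) * fps_X ^ 2 * U (Suc k))"
  shows "fps_X ^ (2 * m + 2) dvd inverse (jden b l k m) - U k"
proof (induction m arbitrary: k)
  case 0
  have "fps_X ^ 0 dvd 0 - U (Suc k)"
    by simp
  from jfrac_step_dvd[OF this, of "b k" "l (Suc k)"] show ?case
    using U[of k] by simp
next
  case (Suc m)
  from jfrac_step_dvd[OF Suc.IH[of "Suc k"], of "b k" "l (Suc k)"] show ?case
    using U[of k] by simp
qed

lemma sden_inverse_approx:
  fixes V :: "nat \<Rightarrow> 'a::field fps"
  assumes V: "\<And>k. V k = inverse (1 - fps_const (a k) * fps_X * V (Suc k))"
  shows "fps_X ^ (m + 1) dvd inverse (sden a k m) - V k"
proof (induction m arbitrary: k)
  case 0
  have "fps_X ^ 0 dvd 1 - V (Suc k)"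
    by simp
  from sfrac_step_dvd[OF this, of "a k"] show ?case
    using V[of k] by simp
next
  case (Suc m)
  from sfrac_step_dvd[OF Suc.IH[of "Suc k"], of "a k"] show ?case
    using V[of k] by simp
qed

lemma tendsto_fps_if_X_power_dvd:
  fixes g :: "nat \<Rightarrow> 'a::comm_ring_1 fps"
  assumes dvd: "\<And>m. fps_X ^ h m dvd g m - f" and grows: "\<And>m. m < h m"
  shows "g \<longlonglongrightarrow> f"
proof (rule tendsto_fpsI)
  fix n
  have "g m $ n = f $ n" if "n \<le> m" for m
  proof -
    obtain C where "g m - f = fps_X ^ h m * C"
      using dvd by blast
    moreover have "n < h m"
      using grows[of m] that by simp
    ultimately have "(g m - f) $ n = 0"
      by (simp add: fps_X_power_mult_nth)
    then show ?thesis
      by simp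
  qed
  then show "eventually (\<lambda>m. g m $ n = f $ n) sequentially"
    unfolding eventually_sequentially by blast
qed

lemma fps_mult_inverse_eq_inverse:
  fixes P Q R :: "'a::field fps"
  assumes "R * Q = P" "P $ 0 \<noteq> 0" "Q $ 0 \<noteq> 0"
  shows "Q * inverse P = inverse R"
proof -
  have "Q * inverse P = inverse R * (Q * inverse Q)"
    using assms(1) fps_inverse_mult[of R Q] by (simp add: mult_ac)
  then show ?thesis
    using assms(3) by (simp add: inverse_mult_eq_1')
qed

theorem has_jfrac_if_recurrence:
  fixes P :: "nat \<Rightarrow> 'a::field fps"
  assumes P0: "P 0 = 1" and nz: "\<And>k. P k $ 0 \<noteq> 0"
    and rec: "\<And>k. P k = (1 - fps_const (b k) * fps_X) * P (Suc k)
                         - fps_const (l (Suc k)) * fps_X ^ 2 * P (Suc (Suc k))"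
  shows "has_jfrac (P 1) b l"
proof -
  define U where "U k = P (Suc k) * inverse (P k)" for k
  have ratio_recurrence:
    "U k = inverse (1 - fps_const (b k) * fps_X - fps_const (l (Suc k)) * fps_X ^ 2 * U (Suc k))" for k
    unfolding U_def
  proof (rule fps_mult_inverse_eq_inverse[OF _ nz nz])
    have "(1 - fps_const (b k) * fps_X - fps_const (l (Suc k)) * fps_X ^ 2
             * (P (Suc (Suc k)) * inverse (P (Suc k)))) * P (Suc k)
        = (1 - fps_const (b k) * fps_X) * P (Suc k)
          - fps_const (l (Suc k)) * fps_X ^ 2 * P (Suc (Suc k)) * (inverse (P (Suc k)) * P (Suc k))"
      by (simp add: algebra_simps)
    also have "\<dots> = P k"
      unfolding inverse_mult_eq_1[OF nz] mult_1_right by (rule rec[symmetric])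
    finally show "(1 - fps_const (b k) * fps_X - fps_const (l (Suc k)) * fps_X ^ 2
                  * (P (Suc (Suc k)) * inverse (P (Suc k)))) * P (Suc k) = P k" .
  qed
  have "fps_X ^ (2 * m + 2) dvd jconv b l m - P 1" for m
    using jden_inverse_approx[of U b l, OF ratio_recurrence, of m 0] by (simp add: jconv_def U_def P0)
  then show ?thesis
    unfolding has_jfrac_def by (rule tendsto_fps_if_X_power_dvd[where h = "\<lambda>m. 2 * m + 2"]) simp
qed

theorem has_sfrac_if_recurrence:
  fixes P :: "nat \<Rightarrow> 'a::field fps"
  assumes P0: "P 0 = 1" and nz: "\<And>k. P k $ 0 \<noteq> 0"
    and rec: "\<And>k. P k = P (Suc k) - fps_const (a k) * fps_X * P (Suc (Suc k))"
  shows "has_sfrac (P 1) a"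
proof -
  define V where "V k = P (Suc k) * inverse (P k)" for k
  have ratio_recurrence: "V k = inverse (1 - fps_const (a k) * fps_X * V (Suc k))" for k
    unfolding V_def
  proof (rule fps_mult_inverse_eq_inverse[OF _ nz nz])
    have "(1 - fps_const (a k) * fps_X * (P (Suc (Suc k)) * inverse (P (Suc k)))) * P (Suc k)
        = P (Suc k) - fps_const (a k) * fps_X * P (Suc (Suc k)) * (inverse (P (Suc k)) * P (Suc k))"
      by (simp add: algebra_simps)
    also have "\<dots> = P k"
      unfolding inverse_mult_eq_1[OF nz] mult_1_right by (rule rec[symmetric])
    finally show "(1 - fps_const (a k) * fps_X * (P (Suc (Suc k)) * inverse (P (Suc k))))
                    * P (Suc k) = P k" .
  qed
  have "fps_X ^ (m + 1) dvd sconv a m - P 1" for m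
    using sden_inverse_approx[of V a, OF ratio_recurrence, of m 0] by (simp add: sconv_def V_def P0)
  then show ?thesis
    unfolding has_sfrac_def by (rule tendsto_fps_if_X_power_dvd[where h = "\<lambda>m. m + 1"]) simp
qed

lemma even_contraction_recurrence:
  fixes P Q :: "nat \<Rightarrow> 'a::comm_ring_1 fps"
  assumes rec: "\<And>k. P k = P (Suc k) - fps_const (a k) * fps_X * P (Suc (Suc k))"
    and Q: "Q 0 = P 0" "\<And>k. Q (Suc k) = P (2 * k + 1)"
    and b: "b 0 = a 0" "\<And>k. b (Suc k) = a (2 * k + 1) + a (2 * k + 2)"
    and l: "\<And>k. l (Suc k) = a (2 * k) * a (2 * k + 1)"
  shows "Q k = (1 - fps_const (b k) * fps_X) * Q (Suc k)
               - fps_const (l (Suc k)) * fps_X ^ 2 * Q (Suc (Suc k))"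
proof -
  have eliminate: "P (Suc (Suc i)) = P (Suc i) + fps_const (a (Suc i)) * fps_X * P (Suc (Suc (Suc i)))"
    for i
    using rec[of "Suc i"] by (simp add: algebra_simps)
  have two_steps: "P i = (1 - fps_const (a i) * fps_X) * P (Suc i)
      - fps_const (a i * a (Suc i)) * fps_X ^ 2 * P (Suc (Suc (Suc i)))" for i
    by (subst rec, subst eliminate) (simp add: algebra_simps power2_eq_square flip: fps_const_mult)
  have three_steps: "P i = (1 - fps_const (a i + a (Suc i)) * fps_X) * P (Suc (Suc i))
      - fps_const (a (Suc i) * a (Suc (Suc i))) * fps_X ^ 2 * P (Suc (Suc (Suc (Suc i))))" for i
    by (subst rec, subst rec[of "Suc i"], subst eliminate[of "Suc i"])
      (simp add: algebra_simps power2_eq_square flip: fps_const_mult fps_const_add)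
  show ?thesis
  proof (cases k)
    case 0
    have "Q (Suc (Suc 0)) = P (Suc (Suc (Suc 0)))"
      using Q(2)[of 1] by (simp add: eval_nat_numeral)
    then show ?thesis
      using 0 two_steps[of 0] Q b(1) l[of 0] by simp
  next
    case (Suc j)
    have "Q k = P (2 * j + 1)" "Q (Suc k) = P (Suc (Suc (2 * j + 1)))"
      "Q (Suc (Suc k)) = P (Suc (Suc (Suc (Suc (2 * j + 1)))))"
      using Q(2) Suc by simp_all
    then show ?thesis
      using three_steps[of "2 * j + 1"] b(2)[of j] l[of "Suc j"] Suc by simp
  qed
qed

section \<open>The series with coefficients \<open>2 ^ (n * (n + 3) div 2)\<close>\<close>

text \<open>\<open>gbinom2 n j\<close> is the Gaussian binomial coefficient $\left[{n+j \atop j}\right]_q$ at $q = 2$.\<close>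

definition gbinom2 :: "nat \<Rightarrow> nat \<Rightarrow> rat" where
  "gbinom2 n j = (\<Prod>i<j. 2 ^ (n + i + 1) - 1) / (\<Prod>i<j. 2 ^ (i + 1) - 1)"

lemma pow2_Suc_minus_one_nonzero: "(2::rat) ^ Suc i - 1 \<noteq> 0"
proof -
  have "(1::rat) < 2 ^ Suc i"
    by (rule one_less_power) auto
  then show ?thesis
    by simp
qed

lemma gbinom2_denominator_nonzero: "(\<Prod>i<j. (2::rat) ^ (i + 1) - 1) \<noteq> 0"
  using pow2_Suc_minus_one_nonzero by (simp add: prod_zero_iff)

lemma gbinom2_0_left [simp]: "gbinom2 0 j = 1"
  using gbinom2_denominator_nonzero[of j] by (simp add: gbinom2_def)

lemma gbinom2_0_right [simp]: "gbinom2 n 0 = 1"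
  by (simp add: gbinom2_def)

lemma gbinom2_numerator_Suc_left:
  "(\<Prod>i<Suc j. (2::rat) ^ (n + i + 1) - 1) = (2 ^ (n + 1) - 1) * (\<Prod>i<j. 2 ^ (Suc n + i + 1) - 1)"
  unfolding prod.lessThan_Suc_shift by simp

lemma gbinom2_Suc_left:
  "gbinom2 (Suc n) j * (2 ^ (n + 1) - 1) = (2 ^ (j + 1) - 1) * gbinom2 n (Suc j)"
  unfolding gbinom2_def gbinom2_numerator_Suc_left prod.lessThan_Suc[of _ j]
  using gbinom2_denominator_nonzero[of j] pow2_Suc_minus_one_nonzero[of j]
  by (simp add: field_simps)

lemma gbinom2_Suc_right:
  "gbinom2 n (Suc j) * (2 ^ (j + 1) - 1) = gbinom2 n j * (2 ^ (n + j + 1) - 1)"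
  unfolding gbinom2_def prod.lessThan_Suc
  using gbinom2_denominator_nonzero[of j] pow2_Suc_minus_one_nonzero[of j]
  by (simp add: field_simps)

lemma gbinom2_pascal:
  "gbinom2 (Suc n) (Suc j) - gbinom2 (Suc n) j = 2 ^ (j + 1) * gbinom2 n (Suc j)"
proof -
  have pow: "(2::rat) ^ (Suc n + j + 1) = 2 ^ (j + 1) * 2 ^ (n + 1)"
    by (simp add: power_add[symmetric])
  have "(gbinom2 (Suc n) (Suc j) - gbinom2 (Suc n) j) * (2 ^ (j + 1) - 1)
      = gbinom2 (Suc n) (Suc j) * (2 ^ (j + 1) - 1) - gbinom2 (Suc n) j * (2 ^ (j + 1) - 1)"
    by (simp only: left_diff_distrib)
  also have "\<dots> = gbinom2 (Suc n) j * (2 ^ (Suc n + j + 1) - 1) - gbinom2 (Suc n) j * (2 ^ (j + 1) - 1)"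
    by (simp only: gbinom2_Suc_right)
  also have "\<dots> = 2 ^ (j + 1) * (gbinom2 (Suc n) j * (2 ^ (n + 1) - 1))"
    unfolding pow by (simp add: algebra_simps)
  also have "\<dots> = 2 ^ (j + 1) * gbinom2 n (Suc j) * (2 ^ (j + 1) - 1)"
    by (simp only: gbinom2_Suc_left mult_ac)
  finally show ?thesis
    using pow2_Suc_minus_one_nonzero[of j] by simp
qed

definition sfrac_coeff :: "nat \<Rightarrow> rat" where
  "sfrac_coeff n = 2 ^ (n + 2) - 2 ^ ((n + 1) div 2) * (1 - (-1) ^ n)"

lemma sfrac_coeff_even: "sfrac_coeff (2 * j) = 2 ^ (2 * j + 2)"
  by (simp add: sfrac_coeff_def)

lemma sfrac_coeff_odd: "sfrac_coeff (2 * j + 1) = 2 ^ (j + 2) * (2 ^ (j + 1) - 1)"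
proof -
  have "(2::rat) ^ (2 * j + 1 + 2) = 2 ^ (j + 2) * 2 ^ (j + 1)"
    by (simp add: power_add[symmetric])
  then show ?thesis
    by (simp add: sfrac_coeff_def algebra_simps)
qed

definition tail_weight :: "nat \<Rightarrow> nat \<Rightarrow> rat" where
  "tail_weight k n = 2 ^ ((k + 1) div 2 * n) * gbinom2 n (k div 2)"

lemma tail_weight_0 [simp]: "tail_weight k 0 = 1"
  by (simp add: tail_weight_def)

lemma tail_weight_recurrence_even:
  "2 ^ (n + 2) * (tail_weight (2 * j + 1) (Suc n) - tail_weight (2 * j) (Suc n))
     = sfrac_coeff (2 * j + 1) * tail_weight (2 * j + 2) n"
proof -
  have "(2::rat) ^ (n + 2) * 2 ^ (j * (n + 1)) = 2 ^ (j + 2) * 2 ^ ((j + 1) * n)"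
    by (simp add: power_add[symmetric] algebra_simps)
  then have "2 ^ (n + 2) * (tail_weight (2 * j + 1) (Suc n) - tail_weight (2 * j) (Suc n))
      = 2 ^ (j + 2) * 2 ^ ((j + 1) * n) * (gbinom2 (Suc n) j * (2 ^ (n + 1) - 1))"
    by (simp add: tail_weight_def power_add algebra_simps)
  also have "\<dots> = sfrac_coeff (2 * j + 1) * tail_weight (2 * j + 2) n"
    unfolding gbinom2_Suc_left sfrac_coeff_odd by (simp add: tail_weight_def algebra_simps)
  finally show ?thesis .
qed

lemma tail_weight_recurrence_odd:
  "2 ^ (n + 2) * (tail_weight (2 * j + 2) (Suc n) - tail_weight (2 * j + 1) (Suc n))
     = sfrac_coeff (2 * j + 2) * tail_weight (2 * j + 3) n"
proof -
  have "n + 2 + (j + 1) * (n + 1) + (j + 1) = 2 * j + 4 + (j + 2) * n"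
    by (simp add: algebra_simps)
  then have pow: "(2::rat) ^ (n + 2) * 2 ^ ((j + 1) * (n + 1)) * 2 ^ (j + 1)
                   = 2 ^ (2 * j + 4) * 2 ^ ((j + 2) * n)"
    by (simp only: power_add[symmetric])
  have "2 ^ (n + 2) * (tail_weight (2 * j + 2) (Suc n) - tail_weight (2 * j + 1) (Suc n))
      = 2 ^ (n + 2) * 2 ^ ((j + 1) * (n + 1)) * (gbinom2 (Suc n) (Suc j) - gbinom2 (Suc n) j)"
    by (simp add: tail_weight_def algebra_simps)
  also have "\<dots> = (2 ^ (n + 2) * 2 ^ ((j + 1) * (n + 1)) * 2 ^ (j + 1)) * gbinom2 n (Suc j)"
    unfolding gbinom2_pascal by (rule mult.assoc[symmetric])
  also have "\<dots> = 2 ^ (2 * j + 4) * 2 ^ ((j + 2) * n) * gbinom2 n (Suc j)"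
    unfolding pow ..
  also have "\<dots> = sfrac_coeff (2 * j + 2) * tail_weight (2 * j + 3) n"
    using sfrac_coeff_even[of "j + 1"] by (simp add: tail_weight_def algebra_simps power_add)
  finally show ?thesis .
qed

lemma tail_weight_recurrence:
  "2 ^ (n + 2) * (tail_weight (Suc k) (Suc n) - tail_weight k (Suc n))
     = sfrac_coeff (Suc k) * tail_weight (Suc (Suc k)) n"
proof -
  obtain j where "k = 2 * j \<or> k = 2 * j + 1"
    by (metis dvd_mult_div_cancel odd_two_times_div_two_succ)
  then show ?thesis
    using tail_weight_recurrence_even[of n j] tail_weight_recurrence_odd[of n j]
    by (auto simp: numeral_eq_Suc)
qed

definition series_coeff :: "nat \<Rightarrow> rat" where
  "series_coeff n = 2 ^ (n * (n + 3) div 2)"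

lemma series_coeff_Suc: "series_coeff (Suc n) = 2 ^ (n + 2) * series_coeff n"
proof -
  have "Suc n * (Suc n + 3) = n * (n + 3) + 2 * (n + 2)"
    by (simp add: algebra_simps)
  then have "Suc n * (Suc n + 3) div 2 = n * (n + 3) div 2 + (n + 2)"
    by simp
  then show ?thesis
    by (simp add: series_coeff_def power_add)
qed

lemma series_coeff_0 [simp]: "series_coeff 0 = 1"
  by (simp add: series_coeff_def)

fun tail :: "nat \<Rightarrow> rat fps" where
  "tail 0 = 1"
| "tail (Suc k) = Abs_fps (\<lambda>n. series_coeff n * tail_weight k n)"

lemma tail_nth_0: "tail k $ 0 = 1"
  by (cases k) simp_all

lemma tail_recurrence: "tail k = tail (Suc k) - fps_const (sfrac_coeff k) * fps_X * tail (Suc (Suc k))"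
proof (rule fps_ext)
  fix n
  have X_nth: "(fps_const c * fps_X * f) $ Suc m = c * f $ m" for c and f :: "rat fps" and m
    by (simp add: mult.assoc fps_X_mult_nth)
  show "tail k $ n = (tail (Suc k) - fps_const (sfrac_coeff k) * fps_X * tail (Suc (Suc k))) $ n"
  proof (cases n)
    case 0
    then show ?thesis
      by (simp add: tail_nth_0 mult.assoc fps_X_mult_nth)
  next
    case (Suc m)
    show ?thesis
    proof (cases k)
      case 0
      have "series_coeff (Suc m) * tail_weight 0 (Suc m)
          = sfrac_coeff 0 * (series_coeff m * tail_weight 1 m)"
        by (simp add: series_coeff_Suc tail_weight_def sfrac_coeff_def power_add)
      then show ?thesis
        using 0 Suc by (simp add: X_nth)
    next
      case (Suc k')
      have "series_coeff (Suc m) * (tail_weight (Suc k') (Suc m) - tail_weight k' (Suc m))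
          = series_coeff m * (2 ^ (m + 2) * (tail_weight (Suc k') (Suc m) - tail_weight k' (Suc m)))"
        by (simp only: series_coeff_Suc mult_ac)
      also have "\<dots> = sfrac_coeff (Suc k') * (series_coeff m * tail_weight (Suc (Suc k')) m)"
        by (simp only: tail_weight_recurrence mult_ac)
      finally show ?thesis
        using Suc \<open>n = Suc m\<close> by (simp add: X_nth algebra_simps)
    qed
  qed
qed

lemma contracted_beta_eq:
  "(2::rat) ^ (Suc k + 1) * (2 ^ (Suc k + 1) + 2 ^ Suc k - 1)
     = sfrac_coeff (2 * k + 1) + sfrac_coeff (2 * k + 2)"
proof -
  have "sfrac_coeff (2 * k + 2) = 2 ^ (2 * k + 4)"
    using sfrac_coeff_even[of "k + 1"] by (simp add: algebra_simps power_add)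
  moreover have "(2::rat) ^ (2 * k) = 2 ^ k * 2 ^ k"
    by (simp add: mult_2 power_add)
  ultimately show ?thesis
    unfolding sfrac_coeff_odd by (simp add: power_add algebra_simps)
qed

lemma contracted_lambda_eq:
  "(2::rat) ^ (3 * Suc k + 1) * (2 ^ Suc k - 1) = sfrac_coeff (2 * k) * sfrac_coeff (2 * k + 1)"
proof -
  have "(2::rat) ^ (3 * k) = 2 ^ k * 2 ^ k * 2 ^ k" "(2::rat) ^ (2 * k) = 2 ^ k * 2 ^ k"
    by (simp_all add: numeral_eq_Suc power_add)
  then show ?thesis
    unfolding sfrac_coeff_odd sfrac_coeff_even by (simp add: power_add algebra_simps)
qed

theorem mainTheorem4:
  fixes F :: "rat fps" and beta lam b :: "nat \<Rightarrow> rat"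
  assumes "F = Abs_fps (\<lambda>n. 2 ^ (n * (n + 3) div 2))"
      and "\<And>n. beta n = 2 ^ (n + 1) * (2 ^ (n + 1) + 2 ^ n - 1)"
      and "\<And>n. lam n = 2 ^ (3 * n + 1) * (2 ^ n - 1)"
      and "\<And>n. b n = 2 ^ (n + 2) - 2 ^ ((n + 1) div 2) * (1 - (-1) ^ n)"
  shows "has_jfrac F beta lam \<and> has_sfrac F b"
proof
  have F: "F = tail 1"
    using assms(1) by (simp add: series_coeff_def tail_weight_def)
  have b: "b = sfrac_coeff"
    using assms(4) by (simp add: sfrac_coeff_def fun_eq_iff)
  show "has_sfrac F b"
    unfolding F b by (rule has_sfrac_if_recurrence[OF tail.simps(1) _ tail_recurrence]) (simp add: tail_nth_0)
  define Q where "Q k = (if k = 0 then 1 else tail (2 * k - 1))" for k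
  have Q_recurrence: "Q k = (1 - fps_const (beta k) * fps_X) * Q (Suc k)
              - fps_const (lam (Suc k)) * fps_X ^ 2 * Q (Suc (Suc k))" for k
  proof (rule even_contraction_recurrence[where P = tail and a = sfrac_coeff, OF tail_recurrence])
    show "beta (Suc k) = sfrac_coeff (2 * k + 1) + sfrac_coeff (2 * k + 2)" for k
      unfolding assms(2) by (rule contracted_beta_eq)
    show "lam (Suc k) = sfrac_coeff (2 * k) * sfrac_coeff (2 * k + 1)" for k
      unfolding assms(3) by (rule contracted_lambda_eq)
  qed (simp_all add: Q_def assms(2) sfrac_coeff_def)
  have "has_jfrac (Q 1) beta lam"
    by (rule has_jfrac_if_recurrence[where P = Q, OF _ _ Q_recurrence]) (simp_all add: Q_def tail_nth_0)
  then show "has_jfrac F beta lam"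
    by (simp add: Q_def F)
qed

end
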